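(* The set $\mathrm{Rec}(N^* )$ of recognizable subsets of $N^*$ is uncountable.
   Context: $N^*$ is the commutative monoid of finite sequences of non-negative integers whose last entry is non-zero (including the empty sequence), with pointwise addition (shorter sequence padded by zeros) and the empty sequence as unit; equivalently the free commutative monoid on countably many generators, isomorphic to $(\mathbb{Z}_{>0},\times,1)$. A subset $S$ of a monoid $M$ is recognizable if there exist a finite monoid $N'$, a monoid morphism $\varphi\colon M \to N'$ and a subset $T \subseteq N'$ with $S = \varphi^{-1}(T)$. *)

theory Defs
  imports "HOL-Algebra.Group" "HOL-Library.Countable_Set"
begin

fun padd :: "nat list \<Rightarrow> nat list \<Rightarrow> nat list" where
  "padd [] ys = ys"
| "padd xs [] = xs"
| "padd (x # xs) (y # ys) = (x + y) # padd xs ys"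

text \<open>Removal of trailing zeros (needed only to be safe; sums of normalized sequences are normalized).\<close>
definition trim :: "nat list \<Rightarrow> nat list" where
  "trim xs = rev (dropWhile (\<lambda>x. x = 0) (rev xs))"

definition Nstar :: "nat list monoid" where
  "Nstar = \<lparr> carrier = {xs. xs = [] \<or> last xs \<noteq> 0},
             mult = (\<lambda>xs ys. trim (padd xs ys)),
             one = [] \<rparr>"

text \<open>Recognizable subsets of a monoid M: preimages of subsets of a finite monoid under a
  monoid morphism. Finite monoids are taken (up to isomorphism) with carrier in nat.\<close>
definition recognizable :: "('a, 'm) monoid_scheme \<Rightarrow> 'a set \<Rightarrow> bool" where
  "recognizable M S \<longleftrightarrow>
     (\<exists>(N :: nat monoid) \<phi> T.
        monoid N \<and> finite (carrier N) \<and>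
        \<phi> \<in> hom M N \<and> \<phi> \<one>\<^bsub>M\<^esub> = \<one>\<^bsub>N\<^esub> \<and>
        T \<subseteq> carrier N \<and>
        S = {x \<in> carrier M. \<phi> x \<in> T})"

definition Rec :: "('a, 'm) monoid_scheme \<Rightarrow> 'a set set" where
  "Rec M = {S. S \<subseteq> carrier M \<and> recognizable M S}"

end

theory Submission
  imports Defs
begin

text \<open>For \<open>A \<subseteq> \<nat>\<close> let \<open>S\<^sub>A\<close> be the set of sequences whose support meets \<open>A\<close>.
  Since the support of a sum is the union of the supports, the indicator of \<open>S\<^sub>A\<close> is a
  morphism onto the two-element monoid \<open>({0,1}, max)\<close>, so \<open>S\<^sub>A\<close> is recognizable. The unit
  vectors show that \<open>A \<mapsto> S\<^sub>A\<close> is injective, hence \<open>Rec(N\<^sup>*)\<close> is at least as large as the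
  power set of \<open>\<nat>\<close>, which is uncountable by Cantor's theorem.\<close>

definition support :: "nat list \<Rightarrow> nat set" where
  "support xs = {i. i < length xs \<and> xs ! i \<noteq> 0}"

lemma support_Nil [simp]: "support [] = {}"
  by (simp add: support_def)

lemma support_replicate_zero [simp]: "support (replicate n 0) = {}"
  by (simp add: support_def)

lemma support_Cons: "support (x # xs) = (if x = 0 then {} else {0}) \<union> Suc ` support xs"
proof (rule Set.set_eqI)
  fix i show "i \<in> support (x # xs) \<longleftrightarrow> i \<in> (if x = 0 then {} else {0}) \<union> Suc ` support xs"
    by (cases i) (auto simp: support_def)
qed

lemma support_padd: "support (padd xs ys) = support xs \<union> support ys"
  by (induction xs ys rule: padd.induct) (auto simp: support_Cons)

lemma support_append_zeros: "support (xs @ replicate n 0) = support xs"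
  by (induction xs) (simp_all add: support_Cons)

lemma trim_append_zeros: "\<exists>n. xs = trim xs @ replicate n 0"
proof -
  let ?zeros = "takeWhile (\<lambda>x. x = 0) (rev xs)"
  have "?zeros = replicate (length ?zeros) 0"
    by (metis (mono_tags) replicate_length_same set_takeWhileD)
  then have "rev xs = replicate (length ?zeros) 0 @ rev (trim xs)"
    unfolding trim_def by (metis rev_rev_ident takeWhile_dropWhile_id)
  then show ?thesis
    by (metis rev_append rev_replicate rev_rev_ident)
qed

lemma support_trim: "support (trim xs) = support xs"
  using trim_append_zeros support_append_zeros by metis

lemma support_unit_vector: "support (replicate i 0 @ [1]) = {i}"
  by (auto simp: support_def nth_append less_Suc_eq)

definition boolean_monoid :: "nat monoid" where
  "boolean_monoid = \<lparr>carrier = {0, 1}, mult = max, one = 0\<rparr>"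

lemma monoid_boolean_monoid: "monoid boolean_monoid"
  by unfold_locales (auto simp: boolean_monoid_def)

definition meets_indicator :: "nat set \<Rightarrow> nat list \<Rightarrow> nat" where
  "meets_indicator A xs = (if support xs \<inter> A = {} then 0 else 1)"

lemma meets_indicator_hom: "meets_indicator A \<in> hom Nstar boolean_monoid"
  by (auto simp: hom_def boolean_monoid_def Nstar_def meets_indicator_def
      support_trim support_padd)

definition meets_support :: "nat set \<Rightarrow> nat list set" where
  "meets_support A = {xs \<in> carrier Nstar. support xs \<inter> A \<noteq> {}}"

lemma meets_support_Rec: "meets_support A \<in> Rec Nstar"
proof -
  have "meets_support A = {xs \<in> carrier Nstar. meets_indicator A xs \<in> {1}}"
    by (auto simp: meets_support_def meets_indicator_def)
  moreover have "meets_indicator A \<one>\<^bsub>Nstar\<^esub> = \<one>\<^bsub>boolean_monoid\<^esub>"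
    by (simp add: Nstar_def boolean_monoid_def meets_indicator_def support_def)
  moreover have "finite (carrier boolean_monoid)" "{1} \<subseteq> carrier boolean_monoid"
    by (auto simp: boolean_monoid_def)
  ultimately have "recognizable Nstar (meets_support A)"
    unfolding recognizable_def using monoid_boolean_monoid meets_indicator_hom by blast
  then show ?thesis
    by (simp add: Rec_def meets_support_def)
qed

lemma unit_vector_in_meets_support_iff: "replicate i 0 @ [1] \<in> meets_support A \<longleftrightarrow> i \<in> A"
  using support_unit_vector[of i] by (auto simp: meets_support_def Nstar_def)

lemma inj_meets_support: "inj meets_support"
  by (rule injI) (metis unit_vector_in_meets_support_iff subsetI subset_antisym)

lemma uncountable_UNIV_nat_set: "uncountable (UNIV :: nat set set)"
  by (metis Cantors_theorem Pow_UNIV UNIV_not_empty range_from_nat_into)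

theorem mainTheorem11:
  shows "uncountable (Rec Nstar)"
proof
  assume "countable (Rec Nstar)"
  then have "countable (range meets_support)"
    by (rule countable_subset[rotated]) (auto simp: meets_support_Rec)
  then have "countable (UNIV :: nat set set)"
    using countable_image_inj_on inj_meets_support by blast
  then show False
    using uncountable_UNIV_nat_set by blast
qed

end
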